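(* Let $G$ be a complete geometric graph and let $B$ be a blocker for $\mathcal{T}_{\leq 3}(G)$. Let $a,b$ be two leaves of $B$ with leaf edges $[a,c]$ and $[b,d]$, respectively. If $a,b,c,d$ are mutually distinct, then $a,b,d,c$ are in convex position and, in this cyclic order, are the vertices of a convex quadrilateral (i.e., its sides are $[a,b],[b,d],[d,c],[c,a]$).
   Context: A geometric graph is a graph whose vertices are points in the plane in general position (no three collinear) and whose edges are straight segments between pairs of vertices; $G$ is complete if all pairs of vertices are joined. $\mathcal{T}_{\leq k}(G)$ denotes the family of all simple (non-crossing) spanning trees of $G$ of (graph) diameter at most $k$. A subgraph $B$ blocks a family $\mathcal{F}$ of subgraphs if it shares at least one edge with every member of $\mathcal{F}$; a blocker of $\mathcal{F}$ is a subgraph that blocks $\mathcal{F}$ and has the smallest possible number of edges among all subgraphs blocking $\mathcal{F}$. A leaf of $B$ is a vertex of degree 1 in $B$, and its leaf edge is the unique edge of $B$ containing it. *)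

theory Defs
  imports "HOL-Analysis.Analysis"
begin

type_synonym point = "real \<times> real"

definition general_position :: "point set \<Rightarrow> bool" where
  "general_position P \<longleftrightarrow>
     (\<forall>x\<in>P. \<forall>y\<in>P. \<forall>z\<in>P. x \<noteq> y \<and> y \<noteq> z \<and> x \<noteq> z \<longrightarrow> \<not> collinear {x, y, z})"

text \<open>Edge set of the complete geometric graph on P; an edge is a 2-element set of vertices,
  drawn as the straight segment between them.\<close>
definition complete_edges :: "point set \<Rightarrow> point set set" where
  "complete_edges P = {{u, v} | u v. u \<in> P \<and> v \<in> P \<and> u \<noteq> v}"

definition seg :: "point set \<Rightarrow> point set" where
  "seg e = (\<Union>u\<in>e. \<Union>v\<in>e. closed_segment u v)"

definition crossing :: "point set \<Rightarrow> point set \<Rightarrow> bool" where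
  "crossing e f \<longleftrightarrow> \<not> (seg e \<inter> seg f \<subseteq> e \<inter> f)"

definition simple_graph :: "point set set \<Rightarrow> bool" where
  "simple_graph T \<longleftrightarrow> (\<forall>e\<in>T. \<forall>f\<in>T. e \<noteq> f \<longrightarrow> \<not> crossing e f)"

definition walk :: "point set set \<Rightarrow> point list \<Rightarrow> bool" where
  "walk T xs \<longleftrightarrow> xs \<noteq> [] \<and> (\<forall>i. Suc i < length xs \<longrightarrow> {xs ! i, xs ! Suc i} \<in> T)"

definition connected_on :: "point set \<Rightarrow> point set set \<Rightarrow> bool" where
  "connected_on P T \<longleftrightarrow>
     (\<forall>u\<in>P. \<forall>v\<in>P. \<exists>xs. walk T xs \<and> hd xs = u \<and> last xs = v)"

definition has_cycle :: "point set set \<Rightarrow> bool" where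
  "has_cycle T \<longleftrightarrow>
     (\<exists>xs. length xs \<ge> 3 \<and> distinct xs \<and> walk T xs \<and> {last xs, hd xs} \<in> T)"

definition spanning_tree :: "point set \<Rightarrow> point set set \<Rightarrow> bool" where
  "spanning_tree P T \<longleftrightarrow> T \<subseteq> complete_edges P \<and> connected_on P T \<and> \<not> has_cycle T"

definition diameter_le :: "point set \<Rightarrow> point set set \<Rightarrow> nat \<Rightarrow> bool" where
  "diameter_le P T k \<longleftrightarrow>
     (\<forall>u\<in>P. \<forall>v\<in>P. \<exists>xs. walk T xs \<and> hd xs = u \<and> last xs = v \<and> length xs \<le> k + 1)"

definition simple_trees_le :: "point set \<Rightarrow> nat \<Rightarrow> point set set set" where
  "simple_trees_le P k =
     {T. spanning_tree P T \<and> simple_graph T \<and> diameter_le P T k}"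

definition blocks :: "point set set \<Rightarrow> point set set set \<Rightarrow> bool" where
  "blocks B F \<longleftrightarrow> (\<forall>T\<in>F. B \<inter> T \<noteq> {})"

definition blocker :: "point set \<Rightarrow> point set set \<Rightarrow> point set set set \<Rightarrow> bool" where
  "blocker P B F \<longleftrightarrow> B \<subseteq> complete_edges P \<and> blocks B F \<and>
     (\<forall>B'. B' \<subseteq> complete_edges P \<and> blocks B' F \<longrightarrow> card B \<le> card B')"

definition degree :: "point set set \<Rightarrow> point \<Rightarrow> nat" where
  "degree B v = card {e\<in>B. v \<in> e}"

definition leaf :: "point set set \<Rightarrow> point \<Rightarrow> bool" where
  "leaf B v \<longleftrightarrow> degree B v = 1"

text \<open>Orientation (signed area) of the triple p q r.\<close>
definition orient :: "point \<Rightarrow> point \<Rightarrow> point \<Rightarrow> real" where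
  "orient p q r = (fst q - fst p) * (snd r - snd p) - (snd q - snd p) * (fst r - fst p)"

definition convex_position :: "point set \<Rightarrow> bool" where
  "convex_position S \<longleftrightarrow> (\<forall>x\<in>S. x \<notin> convex hull (S - {x}))"

definition same_side :: "point \<Rightarrow> point \<Rightarrow> point \<Rightarrow> point \<Rightarrow> bool" where
  "same_side p q r s \<longleftrightarrow> orient p q r * orient p q s > 0"

definition convex_quadrilateral :: "point \<Rightarrow> point \<Rightarrow> point \<Rightarrow> point \<Rightarrow> bool" where
  "convex_quadrilateral p1 p2 p3 p4 \<longleftrightarrow>
     distinct [p1, p2, p3, p4] \<and> convex_position {p1, p2, p3, p4} \<and>
     same_side p1 p2 p3 p4 \<and> same_side p2 p3 p4 p1 \<and>
     same_side p3 p4 p1 p2 \<and> same_side p4 p1 p2 p3"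

end

(*
  Let A be any set of points other than a and b with d in A and c not in A, and join a to b
  and to every point of A, and b to every remaining point. This double star is a spanning tree
  of diameter at most 3 that contains neither [a,c] nor [b,d]; as these are the only edges of
  B at a and at b, and every edge of the double star contains a or b, the double star misses B.
  Hence it cannot be simple: some segment [a,x] with x in A crosses some [b,y] with y not in A.
  Taking for A the points on d's side of the line ab shows that c and d lie on the same side
  of ab; taking for A all points outside the open angle bad shows that the line ad separates
  b from c. By symmetry the line bc separates a from d, and these three facts say precisely
  that a b d c is a convex quadrilateral.
*)

theory Submission
  imports Defs
begin

lemma orient_cyclic: "orient p q r = orient q r p"
  by (simp add: orient_def algebra_simps)

lemma orient_swap: "orient p r q = - orient p q r"
  by (simp add: orient_def algebra_simps)

lemma orient_degenerate [simp]: "orient p q p = 0" "orient p q q = 0" "orient p p q = 0"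
  by (simp_all add: orient_def)

lemma orient_convex_combination:
  "orient q r ((1 - t) *\<^sub>R u + t *\<^sub>R v) = (1 - t) * orient q r u + t * orient q r v"
  by (simp add: orient_def algebra_simps)

lemma orient_pluecker:
  "orient a d x * orient a b y + orient a x y * orient a b d + orient a y d * orient a b x = 0"
  by (simp add: orient_def algebra_simps)

lemma collinear_if_orient_eq_0:
  assumes "orient x y z = 0"
  shows "collinear {x, y, z}"
proof (cases "x = z")
  case True
  then show ?thesis by (simp add: collinear_2 insert_commute)
next
  case False
  have cross: "(fst x - fst z) * (snd y - snd z) = (snd x - snd z) * (fst y - fst z)"
    using assms by (simp add: orient_def algebra_simps)
  have "\<exists>u. y - z = u *\<^sub>R (x - z)"
  proof (cases "fst x = fst z")
    case True
    then have "snd x - snd z \<noteq> 0" using False by (simp add: prod_eq_iff)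
    moreover from this have "fst y = fst z" using True cross by simp
    ultimately show ?thesis
      using True by (intro exI[of _ "(snd y - snd z) / (snd x - snd z)"]) (simp add: prod_eq_iff)
  next
    case False
    then have nz: "fst x - fst z \<noteq> 0" by simp
    define u where "u = (fst y - fst z) / (fst x - fst z)"
    have "fst y - fst z = u * (fst x - fst z)" "snd y - snd z = u * (snd x - snd z)"
      using nz cross by (simp_all add: u_def divide_simps) (simp add: algebra_simps)
    then show ?thesis by (auto simp: prod_eq_iff)
  qed
  then obtain u where "y = u *\<^sub>R x + (1 - u) *\<^sub>R z"
    by (auto simp: algebra_simps)
  then show ?thesis by (auto simp: collinear_3_expand)
qed

lemma general_position_orient_nonzero:
  assumes "general_position P" "x \<in> P" "y \<in> P" "z \<in> P" "x \<noteq> y" "y \<noteq> z" "x \<noteq> z"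
  shows "orient x y z \<noteq> 0"
  using assms collinear_if_orient_eq_0 unfolding general_position_def by blast

lemma seg_doubleton [simp]: "seg {u, v} = closed_segment u v"
  by (auto simp: seg_def closed_segment_commute)

lemma closed_segments_common_endpoint:
  assumes "orient u v w \<noteq> 0"
  shows "closed_segment u v \<inter> closed_segment u w \<subseteq> {u}"
proof
  fix p assume p: "p \<in> closed_segment u v \<inter> closed_segment u w"
  obtain s where s: "p = (1 - s) *\<^sub>R u + s *\<^sub>R v" using p by (auto simp: in_segment)
  obtain t where t: "p = (1 - t) *\<^sub>R u + t *\<^sub>R w" using p by (auto simp: in_segment)
  have "t * orient u v w = orient u v p" by (simp add: t orient_convex_combination)
  also have "\<dots> = 0" by (simp add: s orient_convex_combination)
  finally have "t = 0" using assms by simp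
  then show "p \<in> {u}" by (simp add: t)
qed

lemma closed_segments_disjoint_if_opposite_sides:
  assumes "orient a b x * orient a b y < 0"
  shows "closed_segment a x \<inter> closed_segment b y = {}"
proof (rule ccontr)
  assume "closed_segment a x \<inter> closed_segment b y \<noteq> {}"
  then obtain p s t where "0 \<le> s" "0 \<le> t"
    and s: "p = (1 - s) *\<^sub>R a + s *\<^sub>R x" and t: "p = (1 - t) *\<^sub>R b + t *\<^sub>R y"
    by (auto simp: in_segment)
  moreover have "s * orient a b x = orient a b p" by (simp add: s orient_convex_combination)
  moreover have "orient a b p = t * orient a b y" by (simp add: t orient_convex_combination)
  ultimately have "s = 0 \<and> t = 0"
    using assms by (smt (verit) mult_nonneg_nonneg mult_nonneg_nonpos zero_less_mult_iff mult_less_0_iff)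
  then show False using assms s t by simp
qed

text \<open>If [b,y] meets [a,x], where x and y lie on the same side of the line ab, then the
  line ax separates b from y.\<close>

lemma orient_at_crossing:
  assumes "0 < k * orient a b x" "0 < k * orient a b y" "orient a x y \<noteq> 0"
    and "p \<in> closed_segment a x" "p \<in> closed_segment b y"
  shows "0 < k * orient a x y"
proof -
  obtain s where s: "p = (1 - s) *\<^sub>R a + s *\<^sub>R x" using assms(4) by (auto simp: in_segment)
  obtain t where "0 \<le> t" "t \<le> 1" and t: "p = (1 - t) *\<^sub>R b + t *\<^sub>R y"
    using assms(5) by (auto simp: in_segment)
  have "0 = orient a x p" by (simp add: s orient_convex_combination)
  also have "\<dots> = t * orient a x y - (1 - t) * orient a b x"
    by (simp add: t orient_convex_combination orient_swap[of a x b])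
  finally have "t * orient a x y = (1 - t) * orient a b x" by simp
  with \<open>0 \<le> t\<close> \<open>t \<le> 1\<close> assms(1,3) show ?thesis
    by (smt (verit) mult_nonneg_nonneg mult_pos_pos zero_less_mult_iff mult_less_0_iff)
qed

text \<open>On one side of the line ab, the sign of \<open>orient a u v\<close> orders the points by the angle
  of the ray from a; this is the transitivity of that order.\<close>

lemma orient_transitive:
  assumes "0 < k * orient a b d" "0 < k * orient a b x" "0 < k * orient a b y"
    and "0 < k * orient a d x" "0 < k * orient a x y"
  shows "0 < k * orient a d y"
proof -
  have "0 < (k * orient a d x) * (k * orient a b y) + (k * orient a x y) * (k * orient a b d)"
    using assms by (simp add: add_pos_pos)
  also have "\<dots> = k * k * (orient a d x * orient a b y + orient a x y * orient a b d)"
    by (simp add: algebra_simps)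
  also have "\<dots> = (k * orient a d y) * (k * orient a b x)"
    using orient_pluecker[of a d x b y] orient_swap[of a y d] by (simp add: algebra_simps)
  finally show ?thesis
    using assms(2) by (simp add: zero_less_mult_iff)
qed

lemma not_in_convex_hull_if_separated:
  assumes "orient q r x * orient q r y < 0"
  shows "x \<notin> convex hull {q, r, y}"
proof
  assume "x \<in> convex hull {q, r, y}"
  then obtain u v w where "0 \<le> w" "u + v + w = 1" and x: "x = u *\<^sub>R q + v *\<^sub>R r + w *\<^sub>R y"
    unfolding convex_hull_3 by blast
  then have u: "u = 1 - v - w" by simp
  have "orient q r x = w * orient q r y"
    unfolding x u by (simp add: orient_def algebra_simps)
  then have "orient q r x * orient q r y = w * (orient q r y)\<^sup>2"
    by (simp add: power2_eq_square)
  with assms \<open>0 \<le> w\<close> show False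
    by (metis mult_nonneg_nonneg zero_le_power2 linorder_not_less)
qed

lemma convex_quadrilateralI:
  fixes s :: real
  assumes 123: "0 < s * orient p1 p2 p3" and 234: "0 < s * orient p2 p3 p4"
    and 341: "0 < s * orient p3 p4 p1" and 412: "0 < s * orient p4 p1 p2"
  shows "convex_quadrilateral p1 p2 p3 p4"
proof -
  have agree: "0 < X * Y" if "0 < s * X" "0 < s * Y" for X Y :: real
    using that by (auto simp: zero_less_mult_iff)
  have disagree: "X * - Y < 0" if "0 < s * X" "0 < s * Y" for X Y :: real
    using agree[OF that] by simp
  have "p1 \<noteq> p2" "p1 \<noteq> p3" "p2 \<noteq> p3" using 123 by auto
  moreover have "p2 \<noteq> p4" "p3 \<noteq> p4" using 234 by auto
  moreover have "p1 \<noteq> p4" using 341 by auto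
  ultimately have dist: "distinct [p1, p2, p3, p4]" by simp
  have "same_side p1 p2 p3 p4" using agree[OF 123 412]
    by (simp add: same_side_def orient_cyclic[of p4 p1 p2])
  moreover have "same_side p2 p3 p4 p1" using agree[OF 234 123]
    by (simp add: same_side_def orient_cyclic[of p1 p2 p3])
  moreover have "same_side p3 p4 p1 p2" using agree[OF 341 234]
    by (simp add: same_side_def orient_cyclic[of p2 p3 p4])
  moreover have "same_side p4 p1 p2 p3" using agree[OF 412 341]
    by (simp add: same_side_def orient_cyclic[of p3 p4 p1])
  moreover have "convex_position {p1, p2, p3, p4}"
  proof -
    have "orient p2 p4 p1 * orient p2 p4 p3 < 0"
      using disagree[OF 412 234] by (simp add: orient_cyclic[of p2 p4 p1] orient_swap[of p2 p4 p3])
    moreover have "orient p1 p3 p2 * orient p1 p3 p4 < 0"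
      using disagree[OF 341 123]
      by (simp add: orient_cyclic[of p1 p3 p4] orient_swap[of p1 p3 p2] mult.commute)
    ultimately have "p1 \<notin> convex hull {p2, p4, p3}" "p3 \<notin> convex hull {p2, p4, p1}"
      "p2 \<notin> convex hull {p1, p3, p4}" "p4 \<notin> convex hull {p1, p3, p2}"
      by (simp_all add: not_in_convex_hull_if_separated mult.commute)
    moreover have "{p1, p2, p3, p4} - {p1} = {p2, p4, p3}" "{p1, p2, p3, p4} - {p3} = {p2, p4, p1}"
      "{p1, p2, p3, p4} - {p2} = {p1, p3, p4}" "{p1, p2, p3, p4} - {p4} = {p1, p3, p2}"
      using dist by auto
    ultimately show ?thesis unfolding convex_position_def by auto
  qed
  ultimately show ?thesis using dist by (simp add: convex_quadrilateral_def)
qed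

lemma convex_quadrilateral_if_diagonals_separate:
  assumes abd_abc: "0 < orient a b d * orient a b c"
    and abd_adc: "0 < orient a b d * orient a d c"
    and bac_bcd: "0 < orient b a c * orient b c d"
  shows "convex_quadrilateral a b d c"
proof -
  have same_sign: "0 < X * Z" if "0 < X * Y" "0 < Y * Z" for X Y Z :: real
    using that by (auto simp: zero_less_mult_iff)
  have abc_bdc: "0 < orient a b c * orient b d c"
    using bac_bcd by (simp add: orient_cyclic[of b a c] orient_swap[of a b c] orient_swap[of b c d])
  show ?thesis
  proof (rule convex_quadrilateralI[where s = "orient a b d"])
    show "0 < orient a b d * orient a b d"
      using same_sign[OF abd_abc] abd_abc by (metis mult.commute)
    show "0 < orient a b d * orient b d c" using same_sign[OF abd_abc abc_bdc] .
    show "0 < orient a b d * orient d c a" using abd_adc by (simp add: orient_cyclic[of a d c])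
    show "0 < orient a b d * orient c a b" using abd_abc by (simp add: orient_cyclic[of c a b])
  qed
qed

lemma walk_iff_successively:
  "walk T xs \<longleftrightarrow> xs \<noteq> [] \<and> successively (\<lambda>x y. {x, y} \<in> T) xs"
  by (simp add: walk_def successively_conv_nth)

lemma walk_remdups_adj:
  assumes "xs \<noteq> []" and "successively (\<lambda>x y. x = y \<or> {x, y} \<in> T) xs"
  shows "walk T (remdups_adj xs)"
proof -
  have "successively (\<lambda>x y. x = y \<or> {x, y} \<in> T) (remdups_adj xs)"
    using assms(2) by (rule successively_remdups_adjI)
  moreover have "distinct_adj (remdups_adj xs)" by simp
  ultimately show ?thesis
    using assms(1) by (auto simp: walk_iff_successively successively_conv_nth distinct_adj_conv_nth)
qed

lemma has_cycle_two_neighbours: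
  assumes "has_cycle T"
  obtains V where "card V \<ge> 3"
    and "\<And>v. v \<in> V \<Longrightarrow> \<exists>w w'. w \<noteq> w' \<and> {v, w} \<in> T \<and> {v, w'} \<in> T"
proof -
  obtain xs where len: "length xs \<ge> 3" and dist: "distinct xs" and w: "walk T xs"
    and closing: "{last xs, hd xs} \<in> T"
    using assms unfolding has_cycle_def by blast
  define n where "n = length xs"
  define succ where "succ i = (if i + 1 < n then i + 1 else 0)" for i
  have n: "n \<ge> 3" and ne: "xs \<noteq> []" using len by (auto simp: n_def)
  have edge: "{xs ! i, xs ! succ i} \<in> T" if "i < n" for i
  proof (cases "i + 1 < n")
    case True
    then show ?thesis using w by (simp add: walk_def n_def succ_def)
  next
    case False
    then have "i = n - 1" using that by simp
    moreover have "xs ! (n - 1) = last xs" "xs ! 0 = hd xs"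
      using ne by (simp_all add: n_def last_conv_nth hd_conv_nth)
    ultimately show ?thesis using closing False by (simp add: succ_def insert_commute)
  qed
  have "\<exists>w w'. w \<noteq> w' \<and> {xs ! i, w} \<in> T \<and> {xs ! i, w'} \<in> T" if "i < n" for i
  proof -
    define pred where "pred = (if i = 0 then n - 1 else i - 1)"
    have "pred < n" "succ i < n" "succ pred = i" "succ i \<noteq> pred"
      using that n by (auto simp: pred_def succ_def)
    then show ?thesis
      using edge[of i] edge[of pred] that dist
      by (intro exI[of _ "xs ! succ i"] exI[of _ "xs ! pred"])
        (simp add: n_def nth_eq_iff_index_eq insert_commute)
  qed
  then show ?thesis
    using that[of "set xs"] len dist by (metis distinct_card in_set_conv_nth n_def)
qed

lemma doubleton_in_complete_edges:
  "{u, v} \<in> complete_edges P \<longleftrightarrow> u \<in> P \<and> v \<in> P \<and> u \<noteq> v"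
  unfolding complete_edges_def by (blast dest: doubleton_eq_iff[THEN iffD1])

lemma not_crossing_if_common_vertex:
  assumes "general_position P" "e \<in> complete_edges P" "f \<in> complete_edges P" "e \<noteq> f"
    and "u \<in> e" "u \<in> f"
  shows "\<not> crossing e f"
proof -
  obtain v w where e: "e = {u, v}" and f: "f = {u, w}"
    and "u \<in> P" "v \<in> P" "w \<in> P" "u \<noteq> v" "u \<noteq> w" "v \<noteq> w"
    using assms(2-6) unfolding complete_edges_def by (auto simp: insert_commute)
  then have "closed_segment u v \<inter> closed_segment u w \<subseteq> {u}"
    using assms(1) by (intro closed_segments_common_endpoint general_position_orient_nonzero)
  then show ?thesis by (auto simp: crossing_def e f)
qed

definition double_star :: "point set \<Rightarrow> point \<Rightarrow> point \<Rightarrow> point set \<Rightarrow> point set set" where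
  "double_star P a b A = insert {a, b} ((\<lambda>x. {a, x}) ` A \<union> (\<lambda>y. {b, y}) ` (P - {a, b} - A))"

definition noncrossing_split :: "point set \<Rightarrow> point \<Rightarrow> point \<Rightarrow> point set \<Rightarrow> bool" where
  "noncrossing_split P a b A \<longleftrightarrow> A \<subseteq> P - {a, b} \<and>
     (\<forall>x\<in>A. \<forall>y\<in>P - {a, b} - A. closed_segment a x \<inter> closed_segment b y = {})"

lemma double_star_edgeE:
  assumes "e \<in> double_star P a b A"
  obtains "e = {a, b}" | x where "x \<in> A" "e = {a, x}" | y where "y \<in> P - {a, b} - A" "e = {b, y}"
  using assms unfolding double_star_def by (elim insertE UnE imageE) (simp_all add: that)

lemma double_star_subset_complete_edges:
  assumes "A \<subseteq> P - {a, b}" "a \<in> P" "b \<in> P" "a \<noteq> b"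
  shows "double_star P a b A \<subseteq> complete_edges P"
  using assms by (auto elim!: double_star_edgeE simp: doubleton_in_complete_edges)

lemma double_star_unique_neighbour:
  assumes "{v, w} \<in> double_star P a b A" "v \<notin> {a, b}" "A \<subseteq> P - {a, b}"
  shows "w = (if v \<in> A then a else b)"
  using assms by (auto elim!: double_star_edgeE simp: doubleton_eq_iff)

lemma double_star_acyclic:
  assumes "A \<subseteq> P - {a, b}"
  shows "\<not> has_cycle (double_star P a b A)"
proof
  assume cycle: "has_cycle (double_star P a b A)"
  obtain V where "card V \<ge> 3"
    and two: "\<And>v. v \<in> V \<Longrightarrow>
      \<exists>w w'. w \<noteq> w' \<and> {v, w} \<in> double_star P a b A \<and> {v, w'} \<in> double_star P a b A"
    using has_cycle_two_neighbours[OF cycle] by blast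
  moreover have "card {a, b} < 3" by (simp add: card_insert_if)
  ultimately have "\<not> V \<subseteq> {a, b}" using card_mono[of "{a, b}" V] by auto
  then obtain v where "v \<in> V" "v \<notin> {a, b}" by blast
  then show False
    using two[of v] double_star_unique_neighbour[OF _ _ assms] by metis
qed

lemma double_star_diameter:
  assumes "A \<subseteq> P - {a, b}"
  shows "diameter_le P (double_star P a b A) 3"
  unfolding diameter_le_def
proof (intro ballI)
  fix u v assume "u \<in> P" "v \<in> P"
  define T where "T = double_star P a b A"
  define hub where "hub x = (if x \<in> A then a else b)" for x
  have to_hub: "x = hub x \<or> {x, hub x} \<in> T" if "x \<in> P" for x
    using that assms by (auto simp: T_def hub_def double_star_def)
  have from_hub: "hub x = x \<or> {hub x, x} \<in> T" if "x \<in> P" for x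
    using to_hub[OF that] by (auto simp: insert_commute)
  have between_hubs: "hub x = hub y \<or> {hub x, hub y} \<in> T" for x y
    by (auto simp: T_def hub_def double_star_def insert_commute)
  let ?xs = "remdups_adj [u, hub u, hub v, v]"
  have "walk T ?xs"
    using to_hub[OF \<open>u \<in> P\<close>] from_hub[OF \<open>v \<in> P\<close>] between_hubs[of u v]
    by (intro walk_remdups_adj) auto
  moreover have "length ?xs \<le> 3 + 1"
    using remdups_adj_length[of "[u, hub u, hub v, v]"] by simp
  ultimately show "\<exists>xs. walk T xs \<and> hd xs = u \<and> last xs = v \<and> length xs \<le> 3 + 1"
    by (intro exI[of _ ?xs]) simp
qed

lemma double_star_simple:
  assumes gp: "general_position P" and split: "noncrossing_split P a b A"
    and "a \<in> P" "b \<in> P" "a \<noteq> b"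
  shows "simple_graph (double_star P a b A)"
  unfolding simple_graph_def
proof (intro ballI impI)
  fix e f assume e: "e \<in> double_star P a b A" and f: "f \<in> double_star P a b A" and "e \<noteq> f"
  have A: "A \<subseteq> P - {a, b}" using split by (simp add: noncrossing_split_def)
  show "\<not> crossing e f"
  proof (cases "e \<inter> f = {}")
    case False
    moreover have "e \<in> complete_edges P" "f \<in> complete_edges P"
      using e f double_star_subset_complete_edges[OF A assms(3-5)] by auto
    ultimately show ?thesis
      using not_crossing_if_common_vertex[OF gp _ _ \<open>e \<noteq> f\<close>] by blast
  next
    case True
    have "closed_segment a x \<inter> closed_segment b y = {}"
      "closed_segment b y \<inter> closed_segment a x = {}" if "x \<in> A" "y \<in> P - {a, b} - A" for x y
      using split that by (auto simp: noncrossing_split_def)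
    with e f True show ?thesis
      by (elim double_star_edgeE) (auto simp: crossing_def closed_segment_commute)
  qed
qed

lemma double_star_in_simple_trees:
  assumes "general_position P" "noncrossing_split P a b A" "a \<in> P" "b \<in> P" "a \<noteq> b"
  shows "double_star P a b A \<in> simple_trees_le P 3"
proof -
  have A: "A \<subseteq> P - {a, b}" using assms(2) by (simp add: noncrossing_split_def)
  have "diameter_le P (double_star P a b A) 3" using A by (rule double_star_diameter)
  moreover from this have "connected_on P (double_star P a b A)"
    unfolding diameter_le_def connected_on_def by blast
  ultimately show ?thesis
    using double_star_subset_complete_edges[OF A assms(3-5)] double_star_acyclic[OF A]
      double_star_simple[OF assms]
    by (simp add: simple_trees_le_def spanning_tree_def)
qed

lemma halfplane_split:
  assumes "general_position P" "a \<in> P" "b \<in> P" "a \<noteq> b"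
  shows "noncrossing_split P a b {x \<in> P - {a, b}. 0 < k * orient a b x}"
  unfolding noncrossing_split_def
proof (intro conjI ballI)
  fix x y
  assume x: "x \<in> {x \<in> P - {a, b}. 0 < k * orient a b x}"
    and y: "y \<in> P - {a, b} - {x \<in> P - {a, b}. 0 < k * orient a b x}"
  have "orient a b y \<noteq> 0" "\<not> 0 < k * orient a b y"
    using y assms general_position_orient_nonzero[of P a b y] by auto
  with x have "orient a b x * orient a b y < 0"
    by (auto simp: zero_less_mult_iff mult_less_0_iff)
  then show "closed_segment a x \<inter> closed_segment b y = {}"
    by (rule closed_segments_disjoint_if_opposite_sides)
qed auto

text \<open>For \<open>0 < k * orient a b d\<close>, the removed set consists of the points strictly inside
  the angle bad.\<close>

lemma wedge_split:
  assumes gp: "general_position P" and "a \<in> P" "b \<in> P" "d \<in> P - {a, b}"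
    and d: "0 < k * orient a b d"
  shows "noncrossing_split P a b
           (P - {a, b} - {y \<in> P - {a, b}. 0 < k * orient a b y \<and> k * orient a d y < 0})"
  unfolding noncrossing_split_def
proof (intro conjI ballI)
  let ?W = "{y \<in> P - {a, b}. 0 < k * orient a b y \<and> k * orient a d y < 0}"
  fix x y assume x: "x \<in> P - {a, b} - ?W" and y: "y \<in> P - {a, b} - (P - {a, b} - ?W)"
  have "a \<noteq> b" using d by auto
  have orient_nz: "orient u v w \<noteq> 0"
    if "u \<in> P" "v \<in> P" "w \<in> P" "u \<noteq> v" "v \<noteq> w" "u \<noteq> w" for u v w
    using gp that by (rule general_position_orient_nonzero)
  have y_pos: "0 < k * orient a b y" and y_neg: "k * orient a d y < 0" using y by auto
  show "closed_segment a x \<inter> closed_segment b y = {}"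
  proof (rule ccontr)
    assume "closed_segment a x \<inter> closed_segment b y \<noteq> {}"
    then obtain p where p: "p \<in> closed_segment a x" "p \<in> closed_segment b y" by blast
    have "orient a b x \<noteq> 0" using x assms \<open>a \<noteq> b\<close> orient_nz[of a b x] by auto
    moreover have "\<not> orient a b x * orient a b y < 0"
      using p closed_segments_disjoint_if_opposite_sides by blast
    ultimately have x_pos: "0 < k * orient a b x"
      using y_pos by (auto simp: zero_less_mult_iff mult_less_0_iff)
    have "orient a x y \<noteq> 0" using x y assms orient_nz[of a x y] by auto
    then have xy: "0 < k * orient a x y" using orient_at_crossing[OF x_pos y_pos _ p] by blast
    show False
    proof (cases "x = d")
      case True
      then show False using xy y_neg by simp
    next
      case False
      then have "orient a d x \<noteq> 0" using x assms orient_nz[of a d x] by auto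
      then have "0 < k * orient a d x" using x x_pos by (auto simp: not_less order_le_less)
      then show False using orient_transitive[OF d x_pos y_pos _ xy] y_neg by simp
    qed
  qed
qed auto

lemma leaf_edge_unique:
  assumes "leaf B a" "{a, c} \<in> B" "e \<in> B" "a \<in> e"
  shows "e = {a, c}"
proof -
  obtain z where z: "{e \<in> B. a \<in> e} = {z}"
    using assms(1) unfolding leaf_def degree_def by (rule card_1_singletonE)
  have "{a, c} \<in> {e \<in> B. a \<in> e}" "e \<in> {e \<in> B. a \<in> e}" using assms(2-4) by simp_all
  then show ?thesis unfolding z by simp
qed

lemma noncrossing_split_leaf_neighbours:
  assumes gp: "general_position P" and blocks: "blocks B (simple_trees_le P 3)"
    and a: "leaf B a" "{a, c} \<in> B" and b: "leaf B b" "{b, d} \<in> B"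
    and "distinct [a, b, c, d]" "a \<in> P" "b \<in> P"
    and split: "noncrossing_split P a b A" and "d \<in> A"
  shows "c \<in> A"
proof -
  have "double_star P a b A \<in> simple_trees_le P 3"
    using double_star_in_simple_trees[OF gp split] assms(7-9) by simp
  then obtain e where "e \<in> B" "e \<in> double_star P a b A"
    using blocks unfolding blocks_def by blast
  then show ?thesis
  proof (elim double_star_edgeE)
    assume "e = {a, b}"
    then have "{a, b} = {a, c}" using leaf_edge_unique[OF a \<open>e \<in> B\<close>] by simp
    then show ?thesis using assms(7) by (simp add: doubleton_eq_iff)
  next
    fix x assume "x \<in> A" "e = {a, x}"
    then have "{a, x} = {a, c}" using leaf_edge_unique[OF a \<open>e \<in> B\<close>] by simp
    then show ?thesis using \<open>x \<in> A\<close> assms(7) by (simp add: doubleton_eq_iff)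
  next
    fix y assume "y \<in> P - {a, b} - A" "e = {b, y}"
    then have "{b, y} = {b, d}" using leaf_edge_unique[OF b \<open>e \<in> B\<close>] by simp
    then show ?thesis using \<open>y \<in> P - {a, b} - A\<close> \<open>d \<in> A\<close> by (simp add: doubleton_eq_iff)
  qed
qed

lemma orient_signs_if_splits_agree:
  assumes gp: "general_position P" and P: "a \<in> P" "b \<in> P" "c \<in> P" "d \<in> P"
    and "distinct [a, b, c, d]"
    and splits: "\<And>A. noncrossing_split P a b A \<Longrightarrow> d \<in> A \<Longrightarrow> c \<in> A"
  shows "0 < orient a b d * orient a b c" and "0 < orient a b d * orient a d c"
proof -
  let ?D = "orient a b d"
  let ?H = "{x \<in> P - {a, b}. 0 < ?D * orient a b x}"
  let ?W = "{y \<in> P - {a, b}. 0 < ?D * orient a b y \<and> ?D * orient a d y < 0}"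
  have nz: "?D \<noteq> 0" "orient a d c \<noteq> 0"
    using general_position_orient_nonzero[OF gp P(1,2,4)]
      general_position_orient_nonzero[OF gp P(1,4,3)] assms(6) by auto
  then have D: "0 < ?D * ?D" by (metis not_real_square_gt_zero)
  have "d \<in> ?H" using D assms(6) P by auto
  then have "c \<in> ?H" using assms(6) by (intro splits halfplane_split[OF gp P(1,2)]) simp
  then show same_side: "0 < ?D * orient a b c" by simp
  have "d \<in> P - {a, b} - ?W" using assms(6) P by auto
  then have "c \<in> P - {a, b} - ?W"
    using D assms(6) P by (intro splits wedge_split[OF gp P(1,2)]) auto
  with same_side nz show "0 < ?D * orient a d c"
    by (auto simp: zero_less_mult_iff mult_less_0_iff)
qed

theorem corollary1:
  fixes P :: "point set" and B :: "point set set" and a b c d :: point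
  assumes "finite P"
    and "general_position P"
    and "blocker P B (simple_trees_le P 3)"
    and "leaf B a" and "{a, c} \<in> B"
    and "leaf B b" and "{b, d} \<in> B"
    and "distinct [a, b, c, d]"
  shows "convex_position {a, b, d, c} \<and> convex_quadrilateral a b d c"
proof -
  note gp = assms(2) and dist = assms(8)
  have B: "B \<subseteq> complete_edges P" "blocks B (simple_trees_le P 3)"
    using assms(3) by (simp_all add: blocker_def)
  have P: "a \<in> P" "b \<in> P" "c \<in> P" "d \<in> P"
    using subsetD[OF B(1) assms(5)] subsetD[OF B(1) assms(7)]
    by (simp_all add: doubleton_in_complete_edges)
  have "0 < orient a b d * orient a b c" "0 < orient a b d * orient a d c"
    using orient_signs_if_splits_agree[OF gp P dist]
      noncrossing_split_leaf_neighbours[OF gp B(2) assms(4-7) dist P(1,2)] by blast+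
  moreover have "0 < orient b a c * orient b c d"
    using orient_signs_if_splits_agree(2)[OF gp P(2,1,4,3)]
      noncrossing_split_leaf_neighbours[OF gp B(2) assms(6,7,4,5) _ P(2,1)] dist by auto
  ultimately have "convex_quadrilateral a b d c"
    by (rule convex_quadrilateral_if_diagonals_separate)
  then show ?thesis by (simp add: convex_quadrilateral_def)
qed

end
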